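(* Let $(\hat R,\hat F)$ satisfy conditions (i) and (ii), and assume moreover $q^2\neq1$. Let $\hat R(u):=\hat R+\frac{q-q^{-1}}{u^2-1}\,\mathrm{Id}$. Let $T(u)$ be an operator on $V$, depending on a parameter $u$, with entries in an associative algebra $\mathfrak A$, satisfying \[ \hat R_{12}(u/v)\,T_{\bar1}(u)\,T_{\bar2}(v)=T_{\bar1}(v)\,T_{\bar2}(u)\,\hat R_{12}(u/v) \] for all admissible $u,v$ (with $u^2\ne v^2$), in particular for $u=qv$. Then $S^{(2)}_{12}\,T_{\bar1}(qv)\,T_{\bar2}(v)\,A^{(2)}_{12}=0$. Consequently, if $\delta\in\mathfrak A$ is invertible, commutes with the scalars, and satisfies $\delta\,T(v)\,\delta^{-1}=T(q^{-1}v)$ entrywise for all $v$, then both $\delta\,T(v)$ and $T(v)\,\delta$ are half-quantum matrices, i.e. $S^{(2)}_{12}(\delta T)_{\bar1}(v)(\delta T)_{\bar2}(v)A^{(2)}_{12}=0$ and $S^{(2)}_{12}(T\delta)_{\bar1}(v)(T\delta)_{\bar2}(v)A^{(2)}_{12}=0$.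
   Context: Let $V$ be a finite-dimensional complex vector space, $\mathrm{Id}$ the identity. For an operator $X$ on $V$ (possibly with entries in $\mathfrak A$), $X_j$ denotes $X$ acting in the $j$-th tensor factor of $V^{\otimes m}$; for $Y$ on $V\otimes V$, $Y_{j,k}$ denotes $Y$ in factors $j,k$ and $Y_j:=Y_{j,j+1}$. Conditions on $q\in\mathbb C^*$, $\hat R,\hat F\in\mathrm{Aut}(V\otimes V)$: (i) $\hat R_{12}\hat R_{23}\hat R_{12}=\hat R_{23}\hat R_{12}\hat R_{23}$, $\hat F_{12}\hat F_{23}\hat F_{12}=\hat F_{23}\hat F_{12}\hat F_{23}$, $\hat R_{12}\hat F_{23}\hat F_{12}=\hat F_{23}\hat F_{12}\hat R_{23}$, $\hat F_{12}\hat F_{23}\hat R_{12}=\hat R_{23}\hat F_{12}\hat F_{23}$. (ii) $q+q^{-1}\ne0$ and $\hat R=qS^{(2)}-q^{-1}A^{(2)}$ with $S^{(2)},A^{(2)}$ idempotents, $S^{(2)}+A^{(2)}=\mathrm{Id}$. For an $\mathfrak A$-valued $N$ on $V$: $N_{\bar1}:=N_1$, $N_{\bar2}:=\hat F_{12}N_1\hat F_{12}^{-1}$. A half-quantum matrix is an $\mathfrak A$-valued $N$ with $S^{(2)}_{12}N_{\bar1}N_{\bar2}A^{(2)}_{12}=0$. *)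

theory Defs
  imports Complex_Main
begin

text \<open>Operators on a finite-dimensional space are square matrices indexed by a
finite type; V = C^'n, V (x) V indexed by 'n \<times> 'n, V^(x)3 by 'n \<times> 'n \<times> 'n.\<close>

type_synonym ('i, 'a) sqmat = "'i \<Rightarrow> 'i \<Rightarrow> 'a"

definition mmul :: "('i::finite, 'a::semiring_0) sqmat \<Rightarrow> ('i, 'a) sqmat \<Rightarrow> ('i, 'a) sqmat" where
  "mmul A B = (\<lambda>i k. \<Sum>j\<in>UNIV. A i j * B j k)"

definition idm :: "('i, 'a::zero_neq_one) sqmat" where
  "idm = (\<lambda>i j. if i = j then 1 else 0)"

definition invertible_mat :: "('i::finite, 'a::semiring_1) sqmat \<Rightarrow> bool" where
  "invertible_mat M \<longleftrightarrow> (\<exists>M'. mmul M M' = idm \<and> mmul M' M = idm)"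

definition leg12 :: "('n \<times> 'n, 'a::zero) sqmat \<Rightarrow> ('n \<times> 'n \<times> 'n, 'a) sqmat" where
  "leg12 Y = (\<lambda>(i1, i2, i3) (j1, j2, j3). if i3 = j3 then Y (i1, i2) (j1, j2) else 0)"

definition leg23 :: "('n \<times> 'n, 'a::zero) sqmat \<Rightarrow> ('n \<times> 'n \<times> 'n, 'a) sqmat" where
  "leg23 Y = (\<lambda>(i1, i2, i3) (j1, j2, j3). if i1 = j1 then Y (i2, i3) (j2, j3) else 0)"

definition leg1 :: "('n, 'a::zero) sqmat \<Rightarrow> ('n \<times> 'n, 'a) sqmat" where
  "leg1 X = (\<lambda>(i1, i2) (j1, j2). if i2 = j2 then X i1 j1 else 0)"

text \<open>The algebra 'a is a complex algebra via the structure map emb: a unital ring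
homomorphism from C whose image is central.\<close>
definition cplx_alg_emb :: "(complex \<Rightarrow> 'a::ring_1) \<Rightarrow> bool" where
  "cplx_alg_emb emb \<longleftrightarrow> (\<forall>x y. emb (x + y) = emb x + emb y) \<and> (\<forall>x y. emb (x * y) = emb x * emb y)
     \<and> emb 1 = 1 \<and> (\<forall>z a. emb z * a = a * emb z)"

definition liftm :: "(complex \<Rightarrow> 'a) \<Rightarrow> ('i, complex) sqmat \<Rightarrow> ('i, 'a) sqmat" where
  "liftm emb M = (\<lambda>i j. emb (M i j))"

definition bar1 :: "('n, 'a::zero) sqmat \<Rightarrow> ('n \<times> 'n, 'a) sqmat" where
  "bar1 N = leg1 N"

definition bar2 :: "(complex \<Rightarrow> 'a::ring_1) \<Rightarrow> ('n::finite \<times> 'n, complex) sqmat \<Rightarrow> ('n \<times> 'n, complex) sqmat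
    \<Rightarrow> ('n, 'a) sqmat \<Rightarrow> ('n \<times> 'n, 'a) sqmat" where
  "bar2 emb F Finv N = mmul (mmul (liftm emb F) (leg1 N)) (liftm emb Finv)"

definition cond_i :: "('n::finite \<times> 'n, complex) sqmat \<Rightarrow> ('n \<times> 'n, complex) sqmat \<Rightarrow> bool" where
  "cond_i R F \<longleftrightarrow>
     mmul (mmul (leg12 R) (leg23 R)) (leg12 R) = mmul (mmul (leg23 R) (leg12 R)) (leg23 R) \<and>
     mmul (mmul (leg12 F) (leg23 F)) (leg12 F) = mmul (mmul (leg23 F) (leg12 F)) (leg23 F) \<and>
     mmul (mmul (leg12 R) (leg23 F)) (leg12 F) = mmul (mmul (leg23 F) (leg12 F)) (leg23 R) \<and>
     mmul (mmul (leg12 F) (leg23 F)) (leg12 R) = mmul (mmul (leg23 R) (leg12 F)) (leg23 F)"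

definition cond_ii :: "complex \<Rightarrow> ('n::finite \<times> 'n, complex) sqmat \<Rightarrow> ('n \<times> 'n, complex) sqmat
    \<Rightarrow> ('n \<times> 'n, complex) sqmat \<Rightarrow> bool" where
  "cond_ii q R S A \<longleftrightarrow> q + inverse q \<noteq> 0 \<and>
     R = (\<lambda>i j. q * S i j - inverse q * A i j) \<and>
     mmul S S = S \<and> mmul A A = A \<and> (\<lambda>i j. S i j + A i j) = idm"

definition half_quantum :: "(complex \<Rightarrow> 'a::ring_1) \<Rightarrow> ('n::finite \<times> 'n, complex) sqmat
    \<Rightarrow> ('n \<times> 'n, complex) sqmat \<Rightarrow> ('n \<times> 'n, complex) sqmat \<Rightarrow> ('n \<times> 'n, complex) sqmat
    \<Rightarrow> ('n, 'a) sqmat \<Rightarrow> bool" where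
  "half_quantum emb F Finv S A N \<longleftrightarrow>
     mmul (mmul (mmul (liftm emb S) (bar1 N)) (bar2 emb F Finv N)) (liftm emb A) = (\<lambda>i j. 0)"

definition Ru :: "complex \<Rightarrow> ('i, complex) sqmat \<Rightarrow> complex \<Rightarrow> ('i, complex) sqmat" where
  "Ru q R u = (\<lambda>i j. R i j + (q - inverse q) / (u\<^sup>2 - 1) * idm i j)"

end

theory Submission
  imports Defs
begin

text \<open>At \<open>u = q v\<close> the spectral parameter term \<open>(q - q\<^sup>-\<^sup>1)/(q\<^sup>2 - 1) = q\<^sup>-\<^sup>1\<close> cancels the
  \<open>A\<close>-part of \<open>R = q S - q\<^sup>-\<^sup>1 A\<close>, so \<open>R(q) = (q + q\<^sup>-\<^sup>1) S\<close>. The RTT relation then reads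
  \<open>S T\<^sub>1(qv) T\<^sub>2(v) = T\<^sub>1(v) T\<^sub>2(qv) S\<close> up to the invertible factor \<open>q + q\<^sup>-\<^sup>1\<close>; multiplying by
  \<open>S\<close> on the left and \<open>A\<close> on the right kills the right-hand side since \<open>S A = 0\<close>.
  For the second part, \<open>\<delta> T(v) = T(v/q) \<delta>\<close> lets one move \<open>\<delta>\<close> across the middle of
  \<open>(\<delta>T)\<^sub>1 (\<delta>T)\<^sub>2\<close> (resp. \<open>(T\<delta>)\<^sub>1 (T\<delta>)\<^sub>2\<close>), turning it into \<open>\<delta>\<^sup>2 T\<^sub>1(qv) T\<^sub>2(v)\<close>
  (resp. \<open>T\<^sub>1(v) T\<^sub>2(v/q) \<delta>\<^sup>2\<close>), which the first part annihilates.\<close>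

definition lscale :: "'a::times \<Rightarrow> ('i, 'a) sqmat \<Rightarrow> ('i, 'a) sqmat" where
  "lscale c M = (\<lambda>i j. c * M i j)"

definition rscale :: "('i, 'a::times) sqmat \<Rightarrow> 'a \<Rightarrow> ('i, 'a) sqmat" where
  "rscale M c = (\<lambda>i j. M i j * c)"

lemma mmul_assoc:
  "mmul (mmul (A :: ('i::finite, 'a::semiring_0) sqmat) B) C = mmul A (mmul B C)"
  unfolding mmul_def
  by (intro ext) (simp add: sum_distrib_left sum_distrib_right mult.assoc, rule sum.swap)

lemma mmul_zero_right [simp]: "mmul (M :: ('i::finite, 'a::semiring_0) sqmat) (\<lambda>i j. 0) = (\<lambda>i j. 0)"
  unfolding mmul_def by simp

lemma mmul_idm_right: "mmul (M :: ('i::finite, 'a::semiring_1) sqmat) idm = M"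
  unfolding mmul_def idm_def by (simp add: if_distrib cong: if_cong)

lemma lscale_zero [simp]: "lscale c (\<lambda>i j. 0) = (\<lambda>i j. (0 :: 'a::mult_zero))"
  unfolding lscale_def by simp

lemma rscale_zero [simp]: "rscale (\<lambda>i j. 0) c = (\<lambda>i j. (0 :: 'a::mult_zero))"
  unfolding rscale_def by simp

lemma lscale_lscale: "lscale a (lscale b M) = lscale (a * b) (M :: ('i, 'a::semigroup_mult) sqmat)"
  unfolding lscale_def by (simp add: mult.assoc)

lemma lscale_one [simp]: "lscale 1 M = (M :: ('i, 'a::monoid_mult) sqmat)"
  unfolding lscale_def by simp

lemma mmul_lscale_left:
  "mmul (lscale c M) N = lscale c (mmul (M :: ('i::finite, 'a::semiring_0) sqmat) N)"
  unfolding mmul_def lscale_def by (simp add: sum_distrib_left mult.assoc)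

lemma mmul_lscale_right:
  assumes "\<And>i j. M i j * c = c * M i j"
  shows "mmul (M :: ('i::finite, 'a::semiring_0) sqmat) (lscale c N) = lscale c (mmul M N)"
  unfolding mmul_def lscale_def
  by (simp add: sum_distrib_left mult.assoc[symmetric] assms)

lemma mmul_rscale_right:
  "mmul M (rscale N c) = rscale (mmul (M :: ('i::finite, 'a::semiring_0) sqmat) N) c"
  unfolding mmul_def rscale_def by (simp add: sum_distrib_right mult.assoc)

lemma mmul_rscale_left:
  assumes "\<And>i j. N i j * c = c * N i j"
  shows "mmul (rscale (M :: ('i::finite, 'a::semiring_0) sqmat) c) N = rscale (mmul M N) c"
  unfolding mmul_def rscale_def
  by (simp add: sum_distrib_right mult.assoc assms)

lemma mmul_rscale_lscale:
  "mmul (rscale (M :: ('i::finite, 'a::semiring_0) sqmat) c) N = mmul M (lscale c N)"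
  unfolding mmul_def rscale_def lscale_def by (simp add: mult.assoc)

lemma complementary_idempotent_mmul_eq_zero:
  assumes "mmul S S = S" and "(\<lambda>i j. S i j + A i j) = idm"
  shows "mmul (S :: ('i::finite, 'a::ring_1) sqmat) A = (\<lambda>i j. 0)"
proof -
  have "A = (\<lambda>i j. idm i j - S i j)"
    using assms(2) by (metis add_diff_cancel_left')
  then have "mmul S A = (\<lambda>i k. mmul S idm i k - mmul S S i k)"
    unfolding mmul_def by (simp add: right_diff_distrib sum_subtractf)
  then show ?thesis
    using assms(1) by (simp add: mmul_idm_right)
qed

lemma cplx_alg_emb_zero:
  assumes "cplx_alg_emb emb"
  shows "emb 0 = 0"
proof -
  have "emb (0 + 0) = emb 0 + emb 0"
    using assms unfolding cplx_alg_emb_def by blast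
  then show ?thesis
    by simp
qed

lemma cplx_alg_emb_sum:
  assumes "cplx_alg_emb emb" and "finite X"
  shows "emb (\<Sum>x\<in>X. f x) = (\<Sum>x\<in>X. emb (f x))"
proof -
  have "\<And>x y. emb (x + y) = emb x + emb y"
    using assms(1) unfolding cplx_alg_emb_def by blast
  with assms(2) show ?thesis
    by induction (simp_all add: cplx_alg_emb_zero[OF assms(1)])
qed

lemma liftm_mmul:
  assumes "cplx_alg_emb emb"
  shows "liftm emb (mmul (A :: ('i::finite, complex) sqmat) B) = mmul (liftm emb A) (liftm emb B)"
proof -
  have "\<And>x y. emb (x * y) = emb x * emb y"
    using assms unfolding cplx_alg_emb_def by blast
  then show ?thesis
    unfolding liftm_def mmul_def by (intro ext) (simp add: cplx_alg_emb_sum[OF assms])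
qed

lemma liftm_zero: "cplx_alg_emb emb \<Longrightarrow> liftm emb (\<lambda>i j. 0) = (\<lambda>i j. 0)"
  unfolding liftm_def by (simp add: cplx_alg_emb_zero)

lemma liftm_lscale:
  assumes "cplx_alg_emb emb"
  shows "liftm emb (lscale c M) = lscale (emb c) (liftm emb M)"
proof -
  have "\<And>x y. emb (x * y) = emb x * emb y"
    using assms unfolding cplx_alg_emb_def by blast
  then show ?thesis
    unfolding liftm_def lscale_def by simp
qed

lemma leg1_lscale: "leg1 (lscale c N) = lscale c (leg1 (N :: ('n, 'a::mult_zero) sqmat))"
  unfolding leg1_def lscale_def by (auto intro!: ext)

lemma leg1_rscale: "leg1 (rscale N c) = rscale (leg1 (N :: ('n, 'a::mult_zero) sqmat)) c"
  unfolding leg1_def rscale_def by (auto intro!: ext)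

lemma bar2_lscale:
  assumes "\<And>z. emb z * c = c * emb z"
  shows "bar2 emb F Finv (lscale c N) = lscale c (bar2 emb F Finv (N :: ('n::finite, 'a::ring_1) sqmat))"
  unfolding bar2_def leg1_lscale
  by (simp add: mmul_lscale_right mmul_lscale_left liftm_def assms)

lemma bar2_rscale:
  assumes "\<And>z. emb z * c = c * emb z"
  shows "bar2 emb F Finv (rscale N c) = rscale (bar2 emb F Finv (N :: ('n::finite, 'a::ring_1) sqmat)) c"
  unfolding bar2_def leg1_rscale
  by (simp add: mmul_rscale_right mmul_rscale_left liftm_def assms)

lemma Ru_at_q:
  assumes "cond_ii q R S A" and "q \<noteq> 0" and "q\<^sup>2 \<noteq> 1"
  shows "Ru q R q = lscale (q + inverse q) S"
proof (intro ext)
  fix i j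
  have R: "R = (\<lambda>i j. q * S i j - inverse q * A i j)" and id: "idm i j = S i j + A i j"
    using assms(1) unfolding cond_ii_def by (metis)+
  have "(q - inverse q) / (q\<^sup>2 - 1) = inverse q"
    using assms(2,3) by (simp add: field_simps power2_eq_square)
  then show "Ru q R q i j = lscale (q + inverse q) S i j"
    unfolding Ru_def lscale_def R id by (simp add: algebra_simps)
qed

lemma intertwined_idempotent_mmul_eq_zero:
  fixes P Q X Y :: "('i::finite, 'a::ring_1) sqmat"
  assumes idem: "mmul P P = P" and PQ: "mmul P Q = (\<lambda>i j. 0)"
    and central: "\<And>a. a * c = c * a" and inv: "c' * c = 1"
    and intertw: "mmul (lscale c P) X = mmul Y (lscale c P)"
  shows "mmul (mmul P X) Q = (\<lambda>i j. 0)"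
proof -
  have "lscale c (mmul (mmul P X) Q) = mmul P (mmul (mmul (lscale c P) X) Q)"
    by (simp add: mmul_lscale_left mmul_lscale_right central mmul_assoc[symmetric] idem)
  also have "\<dots> = (\<lambda>i j. 0)"
    unfolding intertw by (simp add: mmul_assoc mmul_lscale_left PQ)
  finally have "lscale c' (lscale c (mmul (mmul P X) Q)) = (\<lambda>i j. 0)"
    by simp
  then show ?thesis
    by (simp add: lscale_lscale inv)
qed

lemma RTT_at_q_annihilated:
  fixes q :: complex
    and R F Finv S A :: "('n::finite \<times> 'n, complex) sqmat"
    and emb :: "complex \<Rightarrow> 'a::ring_1"
    and T :: "complex \<Rightarrow> ('n, 'a) sqmat"
  assumes alg: "cplx_alg_emb emb" and q0: "q \<noteq> 0" and cii: "cond_ii q R S A" and q2: "q\<^sup>2 \<noteq> 1"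
    and RTT: "mmul (mmul (liftm emb (Ru q R q)) (bar1 (T (q * v)))) (bar2 emb F Finv (T v))
       = mmul (mmul (bar1 (T v)) (bar2 emb F Finv (T (q * v)))) (liftm emb (Ru q R q))"
  shows "mmul (mmul (mmul (liftm emb S) (bar1 (T (q * v)))) (bar2 emb F Finv (T v))) (liftm emb A)
    = (\<lambda>i j. 0)"
proof -
  define c where "c = q + inverse q"
  have SS: "mmul S S = S" and SA: "(\<lambda>i j. S i j + A i j) = idm" and c0: "c \<noteq> 0"
    using cii unfolding cond_ii_def c_def by blast+
  have "mmul (mmul (liftm emb S) (mmul (bar1 (T (q * v))) (bar2 emb F Finv (T v)))) (liftm emb A)
    = (\<lambda>i j. 0)"
  proof (rule intertwined_idempotent_mmul_eq_zero)
    show "mmul (liftm emb S) (liftm emb S) = liftm emb S"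
      by (simp add: liftm_mmul[OF alg, symmetric] SS)
    show "mmul (liftm emb S) (liftm emb A) = (\<lambda>i j. 0)"
      by (simp add: liftm_mmul[OF alg, symmetric] complementary_idempotent_mmul_eq_zero[OF SS SA]
          liftm_zero[OF alg])
    show "\<And>a. a * emb c = emb c * a"
      using alg unfolding cplx_alg_emb_def by simp
    show "emb (inverse c) * emb c = 1"
      using alg c0 unfolding cplx_alg_emb_def by (metis left_inverse)
    show "mmul (lscale (emb c) (liftm emb S)) (mmul (bar1 (T (q * v))) (bar2 emb F Finv (T v)))
      = mmul (mmul (bar1 (T v)) (bar2 emb F Finv (T (q * v)))) (lscale (emb c) (liftm emb S))"
      using RTT by (simp add: Ru_at_q[OF cii q0 q2] liftm_lscale[OF alg] c_def mmul_assoc)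
  qed
  then show ?thesis
    by (simp add: mmul_assoc)
qed

lemma half_quantum_lscale:
  fixes M N :: "('n::finite, 'a::ring_1) sqmat"
  assumes central: "\<And>z. emb z * \<delta> = \<delta> * emb z"
    and shift: "rscale N \<delta> = lscale \<delta> M"
    and zero: "mmul (mmul (mmul (liftm emb S) (bar1 M)) (bar2 emb F Finv N)) (liftm emb A) = (\<lambda>i j. 0)"
  shows "half_quantum emb F Finv S A (\<lambda>i j. \<delta> * N i j)"
proof -
  have lift: "\<And>B i j. liftm emb B i j * \<delta> = \<delta> * liftm emb B i j"
    unfolding liftm_def using central by blast
  have "mmul (mmul (mmul (liftm emb S) (bar1 (lscale \<delta> N))) (bar2 emb F Finv (lscale \<delta> N))) (liftm emb A)
    = lscale \<delta> (mmul (mmul (liftm emb S) (mmul (rscale (bar1 N) \<delta>) (bar2 emb F Finv N))) (liftm emb A))"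
    by (simp add: bar1_def leg1_lscale bar2_lscale central mmul_lscale_left mmul_lscale_right lift
        mmul_rscale_lscale mmul_assoc)
  also have "\<dots> = lscale \<delta> (lscale \<delta>
      (mmul (mmul (mmul (liftm emb S) (bar1 M)) (bar2 emb F Finv N)) (liftm emb A)))"
    by (simp add: bar1_def leg1_rscale[symmetric] shift leg1_lscale mmul_lscale_left
        mmul_lscale_right lift mmul_assoc)
  finally show ?thesis
    unfolding half_quantum_def lscale_def[symmetric] zero by simp
qed

lemma half_quantum_rscale:
  fixes M N :: "('n::finite, 'a::ring_1) sqmat"
  assumes central: "\<And>z. emb z * \<delta> = \<delta> * emb z"
    and shift: "lscale \<delta> N = rscale M \<delta>"
    and zero: "mmul (mmul (mmul (liftm emb S) (bar1 N)) (bar2 emb F Finv M)) (liftm emb A) = (\<lambda>i j. 0)"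
  shows "half_quantum emb F Finv S A (\<lambda>i j. N i j * \<delta>)"
proof -
  have lift: "\<And>B i j. liftm emb B i j * \<delta> = \<delta> * liftm emb B i j"
    unfolding liftm_def using central by blast
  have "mmul (mmul (mmul (liftm emb S) (bar1 (rscale N \<delta>))) (bar2 emb F Finv (rscale N \<delta>))) (liftm emb A)
    = rscale (mmul (mmul (mmul (liftm emb S) (rscale (bar1 N) \<delta>)) (bar2 emb F Finv N)) (liftm emb A)) \<delta>"
    by (simp add: bar1_def leg1_rscale bar2_rscale central mmul_rscale_right mmul_rscale_left lift)
  also have "\<dots> = rscale (mmul (mmul (liftm emb S) (mmul (bar1 N) (lscale \<delta> (bar2 emb F Finv N))))
      (liftm emb A)) \<delta>"
    by (simp add: mmul_rscale_right mmul_rscale_lscale mmul_assoc)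
  also have "\<dots> = rscale (rscale
      (mmul (mmul (mmul (liftm emb S) (bar1 N)) (bar2 emb F Finv M)) (liftm emb A)) \<delta>) \<delta>"
    by (simp add: bar2_lscale[symmetric] central shift bar2_rscale mmul_rscale_right
        mmul_rscale_left lift mmul_assoc)
  finally show ?thesis
    unfolding half_quantum_def rscale_def[symmetric] zero by simp
qed

theorem mainTheorem9:
  fixes q :: complex
    and R F Finv S A :: "('n::finite \<times> 'n, complex) sqmat"
    and emb :: "complex \<Rightarrow> 'a::ring_1"
    and T :: "complex \<Rightarrow> ('n, 'a) sqmat"
  assumes alg: "cplx_alg_emb emb"
    and q0: "q \<noteq> 0"
    and ci: "cond_i R F"
    and cii: "cond_ii q R S A"
    and Rinv: "invertible_mat R"
    and Finv: "mmul F Finv = idm" "mmul Finv F = idm"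
    and q2: "q\<^sup>2 \<noteq> 1"
    and RTT: "\<forall>u v. u \<noteq> 0 \<longrightarrow> v \<noteq> 0 \<longrightarrow> u\<^sup>2 \<noteq> v\<^sup>2 \<longrightarrow>
       mmul (mmul (liftm emb (Ru q R (u / v))) (bar1 (T u))) (bar2 emb F Finv (T v))
       = mmul (mmul (bar1 (T v)) (bar2 emb F Finv (T u))) (liftm emb (Ru q R (u / v)))"
  shows "(\<forall>v. v \<noteq> 0 \<longrightarrow>
            mmul (mmul (mmul (liftm emb S) (bar1 (T (q * v)))) (bar2 emb F Finv (T v))) (liftm emb A)
            = (\<lambda>i j. 0))
       \<and> (\<forall>\<delta> \<delta>inv. \<delta> * \<delta>inv = 1 \<longrightarrow> \<delta>inv * \<delta> = 1 \<longrightarrow> (\<forall>z. emb z * \<delta> = \<delta> * emb z) \<longrightarrow>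
            (\<forall>v. v \<noteq> 0 \<longrightarrow> (\<lambda>i j. \<delta> * T v i j * \<delta>inv) = T (inverse q * v)) \<longrightarrow>
            (\<forall>v. v \<noteq> 0 \<longrightarrow>
               half_quantum emb F Finv S A (\<lambda>i j. \<delta> * T v i j) \<and>
               half_quantum emb F Finv S A (\<lambda>i j. T v i j * \<delta>)))"
proof (intro conjI allI impI)
  have q2': "(q * v)\<^sup>2 \<noteq> v\<^sup>2" if "v \<noteq> 0" for v
    using q2 that by (simp add: power_mult_distrib)
  show zero: "mmul (mmul (mmul (liftm emb S) (bar1 (T (q * v)))) (bar2 emb F Finv (T v))) (liftm emb A)
      = (\<lambda>i j. 0)" if "v \<noteq> 0" for v
  proof (rule RTT_at_q_annihilated[OF alg q0 cii q2])
    show "mmul (mmul (liftm emb (Ru q R q)) (bar1 (T (q * v)))) (bar2 emb F Finv (T v))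
      = mmul (mmul (bar1 (T v)) (bar2 emb F Finv (T (q * v)))) (liftm emb (Ru q R q))"
      using RTT[rule_format, of "q * v" v] q0 that q2'[OF that] by simp
  qed
  fix \<delta> \<delta>inv :: 'a and v :: complex
  assume inv: "\<delta>inv * \<delta> = 1" and central: "\<forall>z. emb z * \<delta> = \<delta> * emb z"
    and conj: "\<forall>v. v \<noteq> 0 \<longrightarrow> (\<lambda>i j. \<delta> * T v i j * \<delta>inv) = T (inverse q * v)" and v0: "v \<noteq> 0"
  have "T v = (\<lambda>i j. \<delta> * T (q * v) i j * \<delta>inv)"
    using conj[rule_format, of "q * v"] q0 v0 by (simp add: mult.assoc[symmetric])
  then have "rscale (T v) \<delta> = lscale \<delta> (T (q * v))"
    unfolding rscale_def lscale_def using inv by (simp add: mult.assoc)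
  then show "half_quantum emb F Finv S A (\<lambda>i j. \<delta> * T v i j)"
    using half_quantum_lscale central zero v0 by blast
  have "lscale \<delta> (T v) = rscale (T (inverse q * v)) \<delta>"
    using conj[rule_format, of v] v0 inv unfolding rscale_def lscale_def
    by (metis (no_types) mult.assoc mult_1_right)
  moreover have "mmul (mmul (mmul (liftm emb S) (bar1 (T v))) (bar2 emb F Finv (T (inverse q * v))))
      (liftm emb A) = (\<lambda>i j. 0)"
    using zero[of "inverse q * v"] q0 v0 by (simp add: mult.assoc[symmetric])
  ultimately show "half_quantum emb F Finv S A (\<lambda>i j. T v i j * \<delta>)"
    using half_quantum_rscale central by blast
qed

end
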